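(* An ideal $\mathcal I$ on $\mathbb N$ has the property of long intervals if and only if, for every increasing sequence $(n_k)$ of positive integers, there is an increasing sequence $(m_k)$ of positive integers such that $$\bigcup_{k\in\mathbb N}\{m_k,m_k+1,\ldots,m_k+n_k-1\} \in\mathcal I\quad\text{and}\quad m_k+n_k-1<m_{k+1}\ \text{ for all }k\in\mathbb N.$$
   Context: $\mathbb N=\{1,2,\dots\}$. An ideal on $\mathbb N$ is a family $\mathcal I\subset\mathcal P(\mathbb N)$ closed under finite unions and subsets, with $\mathbb N\notin\mathcal I$ and containing all finite subsets of $\mathbb N$. An ideal $\mathcal I$ on $\mathbb N$ has the property of long intervals (PLI) if there exists a sequence $(m(n))_{n\in\mathbb N}$ of positive integers such that $\bigcup_{n\in\mathbb N}\{m(n),m(n)+1,\ldots,m(n)+n-1\}\in\mathcal I$. *)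

theory Defs
  imports Main
begin

(* The paper's N = {1,2,...} is modelled as the subset {1..} of type nat. *)

definition is_ideal :: "nat set set \<Rightarrow> bool" where
  "is_ideal I \<longleftrightarrow>
     I \<subseteq> Pow {1..} \<and>
     (\<forall>A\<in>I. \<forall>B\<in>I. A \<union> B \<in> I) \<and>
     (\<forall>A\<in>I. \<forall>B. B \<subseteq> A \<longrightarrow> B \<in> I) \<and>
     {1..} \<notin> I \<and>
     (\<forall>F. F \<subseteq> {1..} \<and> finite F \<longrightarrow> F \<in> I)"

definition has_PLI :: "nat set set \<Rightarrow> bool" where
  "has_PLI I \<longleftrightarrow>
     (\<exists>m :: nat \<Rightarrow> nat. (\<forall>n\<ge>1. m n \<ge> 1) \<and>
        (\<Union>n\<in>{1..}. {m n ..< m n + n}) \<in> I)"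

end

theory Submission
  imports Defs
begin

text \<open>Given the long intervals \<open>{m n ..< m n + n}\<close>, an interval of length \<open>n\<^sub>k\<close> lying to the
  right of a bound \<open>B\<close> fits inside the long interval of length \<open>n = B + n\<^sub>k + 1\<close>: start it at
  \<open>max (m n) (B + 1)\<close>. Choosing the blocks one after the other in this way gives a separated
  sequence of intervals whose union lies in the union of the long intervals, hence in the ideal.
  This needs no assumption on the lengths \<open>n\<^sub>k\<close>. Conversely, \<open>n\<^sub>k = k\<close> is itself an
  admissible sequence of lengths.\<close>

definition interval_union :: "(nat \<Rightarrow> nat) \<Rightarrow> (nat \<Rightarrow> nat) \<Rightarrow> nat set" where
  "interval_union start len = (\<Union>k\<in>{1..}. {start k ..< start k + len k})"

definition place_after :: "(nat \<Rightarrow> nat) \<Rightarrow> nat \<Rightarrow> nat \<Rightarrow> nat" where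
  "place_after m B L = max (m (B + L + 1)) (B + 1)"

lemma place_after_gt: "B < place_after m B L"
  unfolding place_after_def by auto

lemma place_after_interval_subset:
  "{place_after m B L ..< place_after m B L + L} \<subseteq> {m (B + L + 1) ..< m (B + L + 1) + (B + L + 1)}"
  unfolding place_after_def by auto

lemma separated_intervals_inside_long_intervals:
  fixes m len :: "nat \<Rightarrow> nat"
  obtains start where "\<And>k. start k \<ge> 1" "\<And>k. start k + len k < start (Suc k)"
    "interval_union start len \<subseteq> interval_union m (\<lambda>n. n)"
proof
  define start where "start = rec_nat 1 (\<lambda>k s. place_after m (s + len k) (len (Suc k)))"
  have start_Suc: "start (Suc k) = place_after m (start k + len k) (len (Suc k))" for k
    unfolding start_def by simp
  show separated: "start k + len k < start (Suc k)" for k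
    unfolding start_Suc by (rule place_after_gt)
  show "start k \<ge> 1" for k
    using separated[of "k - 1"] by (cases k) (simp_all add: start_def)
  show "interval_union start len \<subseteq> interval_union m (\<lambda>n. n)"
  proof
    fix x assume "x \<in> interval_union start len"
    then obtain k where "k \<ge> 1" and x: "x \<in> {start k ..< start k + len k}"
      unfolding interval_union_def by blast
    then obtain j where j: "k = Suc j" by (cases k) auto
    let ?n = "start j + len j + len (Suc j) + 1"
    have "x \<in> {m ?n ..< m ?n + ?n}"
      using place_after_interval_subset[of m "start j + len j" "len (Suc j)"] x
      unfolding j start_Suc by auto
    then show "x \<in> interval_union m (\<lambda>n. n)"
      unfolding interval_union_def by auto
  qed
qed

lemma strict_mono_if_separated:
  fixes start len :: "nat \<Rightarrow> nat"
  assumes "\<And>k. start k + len k < start (Suc k)"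
  shows "strict_mono start"
  unfolding strict_mono_Suc_iff using assms add_lessD1 by blast

theorem fact4p2:
  fixes I :: "nat set set"
  assumes "is_ideal I"
  shows "has_PLI I \<longleftrightarrow>
    (\<forall>nn :: nat \<Rightarrow> nat.
       (\<forall>k\<ge>1. nn k \<ge> 1) \<and> strict_mono_on {1..} nn \<longrightarrow>
       (\<exists>mm :: nat \<Rightarrow> nat.
          (\<forall>k\<ge>1. mm k \<ge> 1) \<and> strict_mono_on {1..} mm \<and>
          (\<Union>k\<in>{1..}. {mm k ..< mm k + nn k}) \<in> I \<and>
          (\<forall>k\<ge>1. mm k + nn k - 1 < mm (k + 1))))"
    (is "_ \<longleftrightarrow> (\<forall>nn. ?admissible nn \<longrightarrow> ?separated_in_I nn)")
proof
  assume "has_PLI I"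
  then obtain m where m_in_I: "interval_union m (\<lambda>n. n) \<in> I"
    unfolding has_PLI_def interval_union_def by blast
  show "\<forall>nn. ?admissible nn \<longrightarrow> ?separated_in_I nn"
  proof (intro allI impI)
    fix nn :: "nat \<Rightarrow> nat"
    obtain mm where pos: "\<And>k. mm k \<ge> 1" and sep: "\<And>k. mm k + nn k < mm (Suc k)"
      and sub: "interval_union mm nn \<subseteq> interval_union m (\<lambda>n. n)"
      using separated_intervals_inside_long_intervals[of nn m] by blast
    have "interval_union mm nn \<in> I"
      using assms m_in_I sub unfolding is_ideal_def by blast
    moreover have "strict_mono_on {1..} mm"
      using strict_mono_if_separated[of mm nn, OF sep] by (simp add: strict_mono_on_def strict_mono_def)
    ultimately show "?separated_in_I nn"
      using pos sep by (intro exI[of _ mm]) (auto simp: interval_union_def less_imp_diff_less)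
  qed
next
  assume "\<forall>nn. ?admissible nn \<longrightarrow> ?separated_in_I nn"
  then have "?separated_in_I (\<lambda>k. k)"
    by (simp add: strict_mono_on_def)
  then show "has_PLI I"
    unfolding has_PLI_def by blast
qed

end
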